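(* Let $q\neq-1$ be real and $n\ge0$. Then $$U_n(x,s,q)=\sum_{k=0}^{\lfloor n/2\rfloor}q^{k^2}\begin{bmatrix} n-k\\ k\end{bmatrix}(1+q^{k+1})\cdots(1+q^{n-k})\,s^kx^{n-2k}.$$
   Context: $U_n(x,s,q)$ is defined by $U_{-1}=0$, $U_0=1$, $U_n(x,s,q)=(1+q^{n})x\,U_{n-1}(x,s,q)+q^{n-1}s\,U_{n-2}(x,s,q)$ for $n\ge1$. Notation: $[m]=1+q+\cdots+q^{m-1}$, $[m]!=[1]\cdots[m]$, $\begin{bmatrix} m\\ j\end{bmatrix}=\frac{[m]!}{[j]![m-j]!}$. Empty products equal $1$. *)

theory Defs
  imports Complex_Main
begin

fun U :: "nat \<Rightarrow> real \<Rightarrow> real \<Rightarrow> real \<Rightarrow> real" where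
  "U 0 x s q = 1"
| "U (Suc 0) x s q = (1 + q) * x"
| "U (Suc (Suc n)) x s q =
     (1 + q ^ (Suc (Suc n))) * x * U (Suc n) x s q + q ^ (Suc n) * s * U n x s q"

definition qint :: "real \<Rightarrow> nat \<Rightarrow> real" where
  "qint q m = (\<Sum>i<m. q ^ i)"

definition qfact :: "real \<Rightarrow> nat \<Rightarrow> real" where
  "qfact q m = (\<Prod>i=1..m. qint q i)"

definition qbinom :: "real \<Rightarrow> nat \<Rightarrow> nat \<Rightarrow> real" where
  "qbinom q m j = qfact q m / (qfact q j * qfact q (m - j))"

end

theory Submission imports Defs begin

text \<open>Both sides satisfy the recurrence defining \<open>U\<^sub>n\<close>. For the coefficient \<open>c(n,k)\<close> of
  \<open>s\<^sup>k x\<^sup>n\<^sup>-\<^sup>2\<^sup>k\<close> this means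
  \<open>c(n+2,k+1) = (1+q\<^sup>n\<^sup>+\<^sup>2) c(n+1,k+1) + q\<^sup>n\<^sup>+\<^sup>1 c(n,k)\<close>; after dividing out the common
  \<open>q\<close>-factorials and products, with \<open>a = k+1\<close> and \<open>b = n-2k\<close> this is the identity
  \<open>[a+b](1+q\<^sup>a\<^sup>+\<^sup>b) = (1+q\<^sup>2\<^sup>a\<^sup>+\<^sup>b)[b] + q\<^sup>b(1+q\<^sup>a)[a]\<close>, both sides of which become
  \<open>1-q\<^sup>2\<^sup>a\<^sup>+\<^sup>2\<^sup>b\<close> after multiplication by \<open>1-q\<close>. The hypothesis \<open>q \<noteq> -1\<close> ensures that
  no \<open>q\<close>-factorial vanishes.\<close>

lemma one_minus_mult_qint: "(1 - q) * qint q n = 1 - q ^ n"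
proof (induction n)
  case (Suc n)
  have "(1 - q) * qint q (Suc n) = (1 - q) * qint q n + (1 - q) * q ^ n"
    by (simp add: qint_def distrib_left)
  with Suc show ?case by (simp add: algebra_simps)
qed (simp add: qint_def)

lemma qint_one: "qint 1 n = real n"
  by (simp add: qint_def)

lemma qint_add_mult_one_plus_power:
  "qint q (a + b) * (1 + q ^ (a + b))
     = (1 + q ^ (2 * a + b)) * qint q b + q ^ b * (1 + q ^ a) * qint q a"
proof (cases "q = 1")
  case True
  then show ?thesis by (simp add: qint_one)
next
  case False
  have "(1 - q) * (qint q (a + b) * (1 + q ^ (a + b))) = (1 - q ^ (a + b)) * (1 + q ^ (a + b))"
    by (simp only: mult.assoc[symmetric] one_minus_mult_qint)
  also have "\<dots> = (1 + q ^ (2 * a + b)) * (1 - q ^ b) + q ^ b * (1 + q ^ a) * (1 - q ^ a)"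
  proof -
    have "q ^ (2 * a + b) = q ^ a * q ^ a * q ^ b" by (simp add: power_add mult_2)
    then show ?thesis by (simp only:) (simp add: power_add algebra_simps)
  qed
  also have "\<dots> = (1 - q) * ((1 + q ^ (2 * a + b)) * qint q b + q ^ b * (1 + q ^ a) * qint q a)"
    by (simp only: one_minus_mult_qint[symmetric]) (simp add: algebra_simps)
  finally show ?thesis using False by simp
qed

lemma qint_nonzero:
  assumes "q \<noteq> -1" "n > 0"
  shows "qint q n \<noteq> 0"
proof
  assume qint_zero: "qint q n = 0"
  show False
  proof (cases "q = 1")
    case True
    with qint_zero assms(2) show False by (simp add: qint_one)
  next
    case False
    from one_minus_mult_qint[of q n] qint_zero have "q ^ n = 1" by simp
    with assms(2) have "\<bar>q\<bar> = 1" using power_eq_1_iff by fastforce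
    with False assms(1) show False by (auto simp: abs_if split: if_splits)
  qed
qed

lemma qfact_nonzero: "q \<noteq> -1 \<Longrightarrow> qfact q n \<noteq> 0"
  using qint_nonzero by (simp add: qfact_def)

lemma qfact_0 [simp]: "qfact q 0 = 1"
  by (simp add: qfact_def)

lemma qfact_Suc: "qfact q (Suc n) = qfact q n * qint q (Suc n)"
  by (simp add: qfact_def)

definition U_coeff :: "real \<Rightarrow> nat \<Rightarrow> nat \<Rightarrow> real" where
  "U_coeff q n k = q ^ (k^2) * qbinom q (n - k) k * (\<Prod>i=k+1..n-k. (1 + q ^ i))"

lemma U_coeff_factorial_form:
  "U_coeff q (2 * k + r) k
     = q ^ (k^2) * qfact q (k + r) / (qfact q k * qfact q r) * (\<Prod>i=k+1..k+r. (1 + q ^ i))"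
proof -
  have "2 * k + r - k = k + r" "k + r - k = r" by simp_all
  then show ?thesis by (simp add: U_coeff_def qbinom_def)
qed

lemma U_coeff_diagonal: "q \<noteq> -1 \<Longrightarrow> U_coeff q (2 * k) k = q ^ (k^2)"
  using U_coeff_factorial_form[of q k 0] qfact_nonzero[of q k] by simp

lemma U_coeff_Suc_Suc:
  assumes q: "q \<noteq> -1" and "2 * k < n"
  shows "U_coeff q (n + 2) (Suc k)
           = (1 + q ^ (n + 2)) * U_coeff q (n + 1) (Suc k) + q ^ (n + 1) * U_coeff q n k"
proof -
  obtain r where n: "n = 2 * k + Suc r"
    using \<open>2 * k < n\<close> by (auto dest!: less_imp_Suc_add)
  define F where "F = qfact q (k + Suc r)"
  define P where "P = (\<Prod>i=k+2..k+Suc r. (1 + q ^ i))"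
  \<comment> \<open>\<open>K\<close> is the common factor of the three coefficients, which leaves the three terms of
    \<open>qint_add_mult_one_plus_power\<close> with \<open>a = k + 1\<close> and \<open>b = r + 1\<close>.\<close>
  define K where "K = q ^ (Suc k ^ 2) * F * P / (qfact q (Suc k) * qfact q (Suc r))"
  have coeff_n_plus_2: "U_coeff q (n + 2) (Suc k) = K * (qint q (Suc k + Suc r) * (1 + q ^ (Suc k + Suc r)))"
  proof -
    have shift: "n + 2 = 2 * Suc k + Suc r" "Suc k + Suc r = Suc (k + Suc r)" using n by simp_all
    show ?thesis
      unfolding shift U_coeff_factorial_form qfact_Suc[of q "k + Suc r"] F_def P_def K_def
      by (simp add: prod.nat_ivl_Suc')
  qed
  have coeff_n_plus_1: "U_coeff q (n + 1) (Suc k) = K * qint q (Suc r)"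
  proof -
    have shift: "n + 1 = 2 * Suc k + r" "Suc k + r = k + Suc r" using n by simp_all
    have "qint q (Suc r) \<noteq> 0" using qint_nonzero[OF q] by simp
    then show ?thesis
      unfolding shift U_coeff_factorial_form qfact_Suc[of q r] F_def P_def K_def by simp
  qed
  have coeff_n: "q ^ (n + 1) * U_coeff q n k = K * (q ^ Suc r * (1 + q ^ Suc k) * qint q (Suc k))"
  proof -
    have split_prod: "(\<Prod>i=k+1..k+Suc r. (1 + q ^ i)) = (1 + q ^ Suc k) * P"
      unfolding P_def by (simp add: prod.atLeast_Suc_atMost)
    have exponent: "n + 1 + k^2 = Suc k ^ 2 + Suc r" by (simp add: n power2_eq_square)
    have "qint q (Suc k) \<noteq> 0" using qint_nonzero[OF q] by simp
    have "q ^ (n + 1) * U_coeff q n k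
        = q ^ (n + 1 + k^2) * F / (qfact q k * qfact q (Suc r)) * ((1 + q ^ Suc k) * P)"
      unfolding n U_coeff_factorial_form split_prod F_def by (simp add: power_add)
    also have "\<dots> = K * (q ^ Suc r * (1 + q ^ Suc k) * qint q (Suc k))"
      unfolding exponent K_def qfact_Suc[of q k] using \<open>qint q (Suc k) \<noteq> 0\<close>
      by (simp add: power_add qfact_nonzero[OF q] field_simps)
    finally show ?thesis .
  qed
  have "n + 2 = 2 * Suc k + Suc r" using n by simp
  then show ?thesis
    unfolding coeff_n_plus_2 coeff_n_plus_1 coeff_n qint_add_mult_one_plus_power by (simp add: algebra_simps)
qed

definition U_term :: "real \<Rightarrow> real \<Rightarrow> real \<Rightarrow> nat \<Rightarrow> nat \<Rightarrow> real" where
  "U_term q x s n k = (if 2 * k \<le> n then U_coeff q n k * s ^ k * x ^ (n - 2 * k) else 0)"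

lemma U_term_0_Suc_Suc:
  "q \<noteq> -1 \<Longrightarrow> U_term q x s (n + 2) 0 = (1 + q ^ (n + 2)) * x * U_term q x s (n + 1) 0"
  using U_coeff_factorial_form[of q 0 "n + 2"] U_coeff_factorial_form[of q 0 "n + 1"]
  by (simp add: U_term_def qfact_nonzero prod.nat_ivl_Suc' numeral_2_eq_2 mult_ac)

lemma U_term_Suc_Suc:
  assumes q: "q \<noteq> -1"
  shows "U_term q x s (n + 2) (Suc k)
           = (1 + q ^ (n + 2)) * x * U_term q x s (n + 1) (Suc k) + q ^ (n + 1) * s * U_term q x s n k"
proof -
  consider "n < 2 * k" | "n = 2 * k" | "2 * k < n" by linarith
  then show ?thesis
  proof cases
    case 1
    then show ?thesis by (simp add: U_term_def)
  next
    case 2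
    then have "U_coeff q (n + 2) (Suc k) = q ^ (Suc k ^ 2)" "U_coeff q n k = q ^ (k ^ 2)"
      using U_coeff_diagonal[OF q, of "Suc k"] U_coeff_diagonal[OF q, of k] by simp_all
    moreover have "Suc k ^ 2 = (n + 1) + k ^ 2" using 2 by (simp add: power2_eq_square)
    ultimately show ?thesis
      using 2 by (simp add: U_term_def power_add)
  next
    case 3
    then obtain r where "n = 2 * k + Suc r" by (auto dest!: less_imp_Suc_add)
    then have "U_term q x s (n + 2) (Suc k) = U_coeff q (n + 2) (Suc k) * s ^ Suc k * x ^ Suc r"
      "U_term q x s (n + 1) (Suc k) = U_coeff q (n + 1) (Suc k) * s ^ Suc k * x ^ r"
      "U_term q x s n k = U_coeff q n k * s ^ k * x ^ Suc r"
      by (simp_all add: U_term_def)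
    then show ?thesis
      unfolding U_coeff_Suc_Suc[OF q 3] by (simp add: algebra_simps)
  qed
qed

lemma sum_U_term_atMost_Suc: "(\<Sum>k\<le>Suc n. U_term q x s n k) = (\<Sum>k\<le>n. U_term q x s n k)"
  by (simp add: U_term_def)

lemma U_eq_sum_U_term:
  assumes "q \<noteq> -1"
  shows "U n x s q = (\<Sum>k\<le>n. U_term q x s n k)"
  using assms
proof (induction n x s q rule: U.induct)
  case (1 x s q)
  then show ?case by (simp add: U_term_def U_coeff_def qbinom_def qfact_nonzero)
next
  case (2 x s q)
  then show ?case by (simp add: U_term_def U_coeff_def qbinom_def qfact_nonzero)
next
  case (3 n x s q)
  have "(\<Sum>k\<le>n + 2. U_term q x s (n + 2) k)
      = U_term q x s (n + 2) 0 + (\<Sum>k\<le>n + 1. U_term q x s (n + 2) (Suc k))"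
    by (simp add: sum.atMost_Suc_shift del: sum.atMost_Suc)
  also have "\<dots> = (1 + q ^ (n + 2)) * x * (U_term q x s (n + 1) 0 + (\<Sum>k\<le>n + 1. U_term q x s (n + 1) (Suc k)))
                  + q ^ (n + 1) * s * (\<Sum>k\<le>n + 1. U_term q x s n k)"
    by (simp only: U_term_0_Suc_Suc[OF "3.prems"] U_term_Suc_Suc[OF "3.prems"]
                   sum.distrib sum_distrib_left distrib_left add.assoc)
  also have "\<dots> = (1 + q ^ (n + 2)) * x * (\<Sum>k\<le>n + 1. U_term q x s (n + 1) k)
                  + q ^ (n + 1) * s * (\<Sum>k\<le>n. U_term q x s n k)"
    by (simp only: sum.atMost_Suc_shift[symmetric] Suc_eq_plus1[symmetric] sum_U_term_atMost_Suc)
  finally show ?case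
    using "3.IH"[OF "3.prems"] by (simp add: numeral_2_eq_2)
qed

theorem theorem2p3:
  fixes q x s :: real and n :: nat
  assumes "q \<noteq> -1"
  shows "U n x s q =
    (\<Sum>k=0..n div 2. q ^ (k^2) * qbinom q (n - k) k
        * (\<Prod>i=k+1..n-k. (1 + q ^ i)) * s ^ k * x ^ (n - 2*k))"
proof -
  have "U n x s q = (\<Sum>k\<le>n. U_term q x s n k)"
    using assms by (rule U_eq_sum_U_term)
  also have "\<dots> = (\<Sum>k=0..n div 2. U_term q x s n k)"
    by (rule sum.mono_neutral_right) (auto simp: U_term_def)
  also have "\<dots> = (\<Sum>k=0..n div 2. q ^ (k^2) * qbinom q (n - k) k
        * (\<Prod>i=k+1..n-k. (1 + q ^ i)) * s ^ k * x ^ (n - 2*k))"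
    by (rule sum.cong) (auto simp: U_term_def U_coeff_def)
  finally show ?thesis .
qed

end
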